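(* Let $A,C\in\mathbb{C}^{n\times n}$ be Hermitian positive semidefinite, and let $L,M$ be any complex matrices with $n$ rows such that $A=LL^*$ and $C=MM^*$. Then $I+AC$ is invertible and \[ \|(I+AC)^{-1}\|\le 1+\frac{\min\{\|A\|^{1/2}\|L^*C\|,\ \|C\|^{1/2}\|AM\|\}}{1+\min\sigma(AC)}. \]
   Context: $\|\cdot\|$ is the spectral (operator) norm, $\sigma(\cdot)$ the spectrum. For $A,C$ Hermitian positive semidefinite it is known that $\sigma(AC)=\sigma(CA)\subseteq[0,\infty)$, so $\min\sigma(AC)\ge 0$ is well defined. *)

theory Defs
  imports "HOL-Analysis.Analysis"
begin

text \<open>Complex matrices are represented as complex^'c^'r (r rows, c columns).\<close>

definition cinner :: "complex^'n \<Rightarrow> complex^'n \<Rightarrow> complex" where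
  "cinner x y = (\<Sum>i\<in>UNIV. cnj (x$i) * y$i)"

definition adj :: "complex^'c^'r \<Rightarrow> complex^'r^'c" where
  "adj A = (\<chi> i j. cnj (A$j$i))"

definition hermitian_psd :: "complex^'n^'n \<Rightarrow> bool" where
  "hermitian_psd A \<longleftrightarrow> adj A = A \<and>
     (\<forall>x. Im (cinner x (A *v x)) = 0 \<and> Re (cinner x (A *v x)) \<ge> 0)"

definition opnorm :: "complex^'c^'r \<Rightarrow> real" where
  "opnorm A = onorm (\<lambda>x. A *v x)"

definition spectrum :: "complex^'n^'n \<Rightarrow> complex set" where
  "spectrum A = {z. \<not> invertible (A - mat z)}"

text \<open>Smallest point of the spectrum, which is real for products of PSD matrices.\<close>
definition min_spectrum :: "complex^'n^'n \<Rightarrow> real" where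
  "min_spectrum A = Min (Re ` spectrum A)"

end

theory Submission
  imports Defs
begin

text \<open>
  Put \<open>N = L\<^sup>* M\<close> and \<open>G = L\<^sup>* C\<close>. If \<open>z + A C z = x\<close>, then \<open>u = G z\<close> lies in the range
  of \<open>N\<close>, satisfies \<open>u + N N\<^sup>* u = G x\<close>, and \<open>z = x - L u\<close>. On the range of \<open>N\<close> the positive
  semidefinite matrix \<open>N N\<^sup>*\<close> is bounded below by its smallest positive eigenvalue, which is
  also an eigenvalue of \<open>A C = L (G L)\<close> because \<open>N N\<^sup>* = G L\<close>. Hence
  \<open>(1 + min \<sigma>(A C)) \<parallel>u\<parallel> \<le> \<parallel>G\<parallel> \<parallel>x\<parallel>\<close>, and \<open>\<parallel>z\<parallel> \<le> \<parallel>x\<parallel> + \<parallel>L\<parallel> \<parallel>u\<parallel>\<close> with \<open>\<parallel>L\<parallel> = \<parallel>A\<parallel>\<^sup>1\<^sup>/\<^sup>2\<close>.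
  The second bound is the first one applied to \<open>((I + A C)\<^sup>-\<^sup>1)\<^sup>* = (I + C A)\<^sup>-\<^sup>1\<close>.
\<close>

lemma adj_adj [simp]: "adj (adj P) = P"
  by (simp add: adj_def vec_eq_iff)

lemma adj_matrix_mult: "adj (P ** Q) = adj Q ** adj P"
  by (simp add: adj_def vec_eq_iff matrix_matrix_mult_def mult.commute)

lemma adj_add: "adj (P + Q) = adj P + adj Q"
  by (simp add: adj_def vec_eq_iff)

lemma adj_mat_1: "adj (mat 1 :: complex^'n^'n) = mat 1"
  by (simp add: adj_def vec_eq_iff mat_def)

lemma cinner_matrix_vector_adj: "cinner x (P *v y) = cinner (adj P *v x) y"
  unfolding cinner_def adj_def matrix_vector_mult_def
  by (simp add: sum_distrib_left sum_distrib_right, subst sum.swap, simp add: mult_ac)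

lemma inner_eq_Re_cinner: "x \<bullet> y = Re (cinner x y)"
  by (simp add: inner_vec_def cinner_def inner_complex_def)

lemma inner_matrix_vector_adj: "x \<bullet> (P *v y) = (adj P *v x) \<bullet> y"
  by (simp add: inner_eq_Re_cinner cinner_matrix_vector_adj)

lemma inner_gram_matrix: "a \<bullet> ((N ** adj N) *v b) = (adj N *v a) \<bullet> (adj N *v b)"
  by (simp add: matrix_vector_mul_assoc[symmetric] inner_matrix_vector_adj)

lemma matrix_vector_mult_mat: "(mat z :: complex^'n^'n) *v v = z *s v"
  by (simp add: vec_eq_iff matrix_vector_mult_def mat_def if_distrib if_distribR cong: if_cong)

lemma scaleR_eq_of_real_scalar_mult: "(r::real) *\<^sub>R (v::complex^'n) = complex_of_real r *s v"
  unfolding vec_eq_iff by (simp add: scaleR_conv_of_real[where 'a=complex])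

subsection \<open>The operator norm\<close>

lemma norm_matrix_vector_le_opnorm: "norm (P *v x) \<le> opnorm P * norm x"
  unfolding opnorm_def by (rule onorm) simp

lemma opnorm_le: "(\<And>x. norm (P *v x) \<le> b * norm x) \<Longrightarrow> opnorm P \<le> b"
  unfolding opnorm_def by (rule onorm_le)

lemma opnorm_nonneg: "0 \<le> opnorm P"
  unfolding opnorm_def by (rule onorm_pos_le) simp

lemma norm_adj_matrix_vector_squared: "norm (adj P *v x) ^ 2 = x \<bullet> (P *v (adj P *v x))"
  by (simp add: power2_norm_eq_inner inner_matrix_vector_adj)

lemma opnorm_adj_le: "opnorm (adj P) \<le> opnorm P"
proof (rule opnorm_le)
  fix x
  let ?y = "adj P *v x"
  have "norm ?y * norm ?y = x \<bullet> (P *v ?y)"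
    by (simp add: norm_adj_matrix_vector_squared[symmetric] power2_eq_square)
  also have "\<dots> \<le> norm x * norm (P *v ?y)" by (rule norm_cauchy_schwarz)
  also have "\<dots> \<le> (opnorm P * norm x) * norm ?y"
    using mult_left_mono[OF norm_matrix_vector_le_opnorm[of P ?y] norm_ge_zero[of x]]
    by (simp add: mult_ac)
  finally show "norm ?y \<le> opnorm P * norm x"
    using opnorm_nonneg[of P] by (cases "norm ?y = 0") (simp_all add: mult_le_cancel_right)
qed

lemma opnorm_adj: "opnorm (adj P) = opnorm P"
  using opnorm_adj_le[of P] opnorm_adj_le[of "adj P"] by simp

lemma opnorm_le_sqrt_opnorm_gram: "opnorm L \<le> sqrt (opnorm (L ** adj L))"
proof -
  have "opnorm (adj L) \<le> sqrt (opnorm (L ** adj L))"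
  proof (rule opnorm_le)
    fix x
    have "norm (adj L *v x) ^ 2 \<le> norm x * norm ((L ** adj L) *v x)"
      by (simp add: norm_adj_matrix_vector_squared matrix_vector_mul_assoc norm_cauchy_schwarz)
    also have "\<dots> \<le> norm x * (opnorm (L ** adj L) * norm x)"
      by (simp add: mult_left_mono norm_matrix_vector_le_opnorm)
    also have "\<dots> = (sqrt (opnorm (L ** adj L)) * norm x) ^ 2"
      by (simp add: power_mult_distrib opnorm_nonneg power2_eq_square)
    finally show "norm (adj L *v x) \<le> sqrt (opnorm (L ** adj L)) * norm x"
      by (rule power2_le_imp_le) (simp add: opnorm_nonneg)
  qed
  then show ?thesis by (simp add: opnorm_adj)
qed

subsection \<open>Rayleigh quotients of self-adjoint maps\<close>

lemma quadratic_nonneg_imp_linear_coeff_eq_0: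
  fixes a c :: real
  assumes "0 \<le> a" and "\<And>t. 0 \<le> 2 * t * a + t\<^sup>2 * c"
  shows "a = 0"
proof (rule ccontr)
  assume "a \<noteq> 0"
  with assms(1) have a: "0 < a" by simp
  show False
  proof (cases "c \<le> 0")
    case True
    with assms(2)[of "-1"] a show False by simp
  next
    case False
    with assms(2)[of "-a/c"] a have "0 \<le> -(a*a)/c"
      by (simp add: power2_eq_square field_simps)
    moreover have "0 < a*a/c" using a False by simp
    ultimately show False by linarith
  qed
qed

text \<open>
  If \<open>w\<close> minimizes the Rayleigh quotient of \<open>T\<close> on an invariant subspace, then perturbing
  \<open>w\<close> in the direction of the residual \<open>r = T w - (w \<bullet> T w) w\<close> (which is orthogonal to \<open>w\<close>) shows
  that \<open>r = 0\<close>.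
\<close>
lemma rayleigh_minimizer_is_eigenvector:
  fixes T :: "'a::real_inner \<Rightarrow> 'a"
  assumes T: "linear T" and sym: "\<And>x y. x \<bullet> T y = T x \<bullet> y"
    and S: "subspace S" "T ` S \<subseteq> S"
    and w: "w \<in> S" "norm w = 1"
    and min: "\<And>s. s \<in> S \<Longrightarrow> (w \<bullet> T w) * (s \<bullet> s) \<le> s \<bullet> T s"
  shows "T w = (w \<bullet> T w) *\<^sub>R w"
proof -
  define \<mu> where "\<mu> = w \<bullet> T w"
  define r where "r = T w - \<mu> *\<^sub>R w"
  have ww: "w \<bullet> w = 1" using w(2) by (simp add: norm_eq_1)
  have rS: "r \<in> S" unfolding r_def using S w(1) by (auto intro: subspace_diff subspace_scale)
  have rw: "r \<bullet> w = 0"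
    unfolding r_def \<mu>_def using ww sym[of w w] by (simp add: inner_diff_left)
  have rTw: "r \<bullet> T w = r \<bullet> r"
    unfolding r_def using rw[unfolded r_def]
    by (simp add: inner_diff_left inner_diff_right inner_commute algebra_simps)
  have "r \<bullet> r = 0"
  proof (rule quadratic_nonneg_imp_linear_coeff_eq_0)
    fix t :: real
    let ?v = "w + t *\<^sub>R r"
    have le: "\<mu> * (?v \<bullet> ?v) \<le> ?v \<bullet> T ?v"
      unfolding \<mu>_def using min S(1) w(1) rS by (simp add: subspace_add subspace_scale)
    have norm_v: "?v \<bullet> ?v = 1 + t\<^sup>2 * (r \<bullet> r)"
      using ww rw by (simp add: inner_add_left inner_add_right power2_eq_square inner_commute)
    have quad_v: "?v \<bullet> T ?v = \<mu> + 2 * t * (r \<bullet> r) + t\<^sup>2 * (r \<bullet> T r)"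
      using rTw sym[of w r] unfolding \<mu>_def
      by (simp add: linear_add[OF T] linear_scale[OF T] inner_add_left inner_add_right
          power2_eq_square algebra_simps inner_commute)
    from le show "0 \<le> 2 * t * (r \<bullet> r) + t\<^sup>2 * (r \<bullet> T r - \<mu> * (r \<bullet> r))"
      unfolding norm_v quad_v by (simp add: algebra_simps)
  qed simp
  then show ?thesis unfolding r_def \<mu>_def by simp
qed

lemma rayleigh_minimizer_exists:
  fixes T :: "'a::euclidean_space \<Rightarrow> 'a"
  assumes T: "linear T" and S: "subspace S" and w: "w \<in> S" "w \<noteq> 0"
  shows "\<exists>v\<in>S. norm v = 1 \<and> (\<forall>s\<in>S. (v \<bullet> T v) * (s \<bullet> s) \<le> s \<bullet> T s)"
proof -
  define K where "K = S \<inter> sphere 0 1"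
  have normalize: "(1 / norm s) *\<^sub>R s \<in> K" if "s \<in> S" "s \<noteq> 0" for s
    using that subspace_scale[OF S] by (simp add: K_def)
  have "compact K" unfolding K_def using closed_subspace[OF S] by (simp add: closed_Int_compact)
  moreover have "K \<noteq> {}" using normalize[OF w] by blast
  moreover have "continuous_on K (\<lambda>v. v \<bullet> T v)"
    using T by (intro continuous_on_inner continuous_on_id linear_continuous_on)
      (simp add: linear_conv_bounded_linear)
  ultimately obtain v where v: "v \<in> K" and vmin: "\<And>y. y \<in> K \<Longrightarrow> v \<bullet> T v \<le> y \<bullet> T y"
    by (metis continuous_attains_inf)
  have "(v \<bullet> T v) * (s \<bullet> s) \<le> s \<bullet> T s" if "s \<in> S" for s
  proof (cases "s = 0")
    case False
    let ?s = "(1 / norm s) *\<^sub>R s"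
    have "v \<bullet> T v \<le> ?s \<bullet> T ?s" using vmin normalize[OF that False] by blast
    also have "?s \<bullet> T ?s = (s \<bullet> T s) / (s \<bullet> s)"
      by (simp add: linear_scale[OF T] power2_norm_eq_inner[symmetric] power2_eq_square)
    finally show ?thesis using False by (simp add: pos_le_divide_eq)
  qed (simp add: linear_0[OF T])
  then show ?thesis using v unfolding K_def by auto
qed

lemma finite_eigenvalues_selfadjoint:
  fixes T :: "'a::euclidean_space \<Rightarrow> 'a"
  assumes sym: "\<And>x y. x \<bullet> T y = T x \<bullet> y"
  shows "finite {\<mu>. \<exists>v. v \<noteq> 0 \<and> T v = \<mu> *\<^sub>R v}" (is "finite ?E")
proof -
  define e where "e \<mu> = (SOME v. v \<noteq> 0 \<and> T v = \<mu> *\<^sub>R v)" for \<mu>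
  have e: "e \<mu> \<noteq> 0 \<and> T (e \<mu>) = \<mu> *\<^sub>R e \<mu>" if "\<mu> \<in> ?E" for \<mu>
    using that unfolding e_def mem_Collect_eq by (rule someI_ex)
  have "inj_on e ?E"
  proof (rule inj_onI)
    fix \<mu> \<nu> assume "\<mu> \<in> ?E" "\<nu> \<in> ?E" "e \<mu> = e \<nu>"
    then have "\<mu> *\<^sub>R e \<mu> = \<nu> *\<^sub>R e \<mu>" using e by metis
    then show "\<mu> = \<nu>" using e \<open>\<mu> \<in> ?E\<close> by simp
  qed
  moreover have "pairwise orthogonal (e ` ?E)"
  proof (rule pairwise_imageI)
    fix \<mu> \<nu> assume \<mu>: "\<mu> \<in> ?E" and \<nu>: "\<nu> \<in> ?E" and "\<mu> \<noteq> \<nu>"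
    have "\<nu> * (e \<mu> \<bullet> e \<nu>) = \<mu> * (e \<mu> \<bullet> e \<nu>)"
      using sym[of "e \<mu>" "e \<nu>"] e[OF \<mu>] e[OF \<nu>] by (metis inner_scaleR_left inner_scaleR_right)
    with \<open>\<mu> \<noteq> \<nu>\<close> show "orthogonal (e \<mu>) (e \<nu>)" by (auto simp: orthogonal_def)
  qed
  then have "finite (e ` ?E)" by (rule pairwise_orthogonal_imp_finite)
  ultimately show ?thesis by (rule finite_imageD[rotated])
qed

subsection \<open>Gram matrices and their spectra\<close>

lemma gram_matrix_selfadjoint: "a \<bullet> ((N ** adj N) *v b) = ((N ** adj N) *v a) \<bullet> b"
  by (simp add: inner_gram_matrix inner_commute)

lemma gram_eigenvalue_le_rayleigh:
  fixes N :: "complex^'m^'k"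
  assumes "w \<in> range ((*v) N)" and "w \<noteq> 0"
  shows "\<exists>\<mu> v. 0 < \<mu> \<and> v \<noteq> 0 \<and> (N ** adj N) *v v = \<mu> *\<^sub>R v \<and>
           \<mu> * (w \<bullet> w) \<le> w \<bullet> ((N ** adj N) *v w)"
proof -
  let ?T = "(*v) (N ** adj N)" and ?S = "range ((*v) N)"
  have S: "subspace ?S" by (simp add: linear_subspace_image)
  have TS: "?T ` ?S \<subseteq> ?S" by (auto simp: matrix_vector_mul_assoc[symmetric])
  obtain v where v: "v \<in> ?S" "norm v = 1"
    and vmin: "\<forall>s\<in>?S. (v \<bullet> ?T v) * (s \<bullet> s) \<le> s \<bullet> ?T s"
    using rayleigh_minimizer_exists[OF matrix_vector_mul_linear S assms] by blast
  have eig: "?T v = (v \<bullet> ?T v) *\<^sub>R v"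
    using vmin by (intro rayleigh_minimizer_is_eigenvector[OF matrix_vector_mul_linear
        gram_matrix_selfadjoint S TS v]) blast
  have "0 < v \<bullet> ?T v"
  proof (rule ccontr)
    assume "\<not> 0 < v \<bullet> ?T v"
    then have "adj N *v v = 0" by (simp add: inner_gram_matrix)
    moreover obtain q where "v = N *v q" using v(1) by blast
    ultimately have "v \<bullet> v = 0" by (simp add: inner_matrix_vector_adj[of _ N] inner_commute)
    then show False using v(2) by (simp add: norm_eq_1)
  qed
  then show ?thesis using eig v(2) vmin assms(1) by (intro exI[of _ "v \<bullet> ?T v"] exI[of _ v]) auto
qed

lemma gram_eigenvalue_real_nonneg:
  fixes N :: "complex^'m^'k"
  assumes "(N ** adj N) *v u = z *s u" and "u \<noteq> 0"
  shows "z = complex_of_real (Re z) \<and> 0 \<le> Re z"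
proof -
  let ?X = "N ** adj N"
  have scale: "(a *s u) \<bullet> (b *s u) = Re (cnj a * b) * (u \<bullet> u)" for a b
    by (simp add: inner_vec_def inner_complex_def sum_distrib_left algebra_simps)
  have uu: "0 < u \<bullet> u" using assms(2) by simp
  have "0 \<le> u \<bullet> (?X *v u)" by (simp add: inner_gram_matrix)
  also have "u \<bullet> (?X *v u) = Re z * (u \<bullet> u)"
    using assms(1) scale[of 1 z] by simp
  finally have "0 \<le> Re z" using uu by (simp add: zero_le_mult_iff)
  have "(?X *v u) \<bullet> (\<i> *s u) = u \<bullet> (?X *v (\<i> *s u))" by (simp add: gram_matrix_selfadjoint)
  then have "(z *s u) \<bullet> (\<i> *s u) = (1 *s u) \<bullet> ((\<i> * z) *s u)"
    using assms(1) by (simp add: vector_scalar_commute)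
  then have "Im z * (u \<bullet> u) = - Im z * (u \<bullet> u)" by (simp only: scale) simp
  then have "Im z = 0" using uu by simp
  with \<open>0 \<le> Re z\<close> show ?thesis by (simp add: complex_eq_iff)
qed

lemma spectrum_iff_eigenvector: "z \<in> spectrum P \<longleftrightarrow> (\<exists>v. v \<noteq> 0 \<and> P *v v = z *s v)"
proof -
  have "invertible (P - mat z) \<longleftrightarrow> (\<forall>x. (P - mat z) *v x = 0 \<longrightarrow> x = 0)"
    by (simp add: invertible_left_inverse matrix_left_invertible_ker)
  then show ?thesis
    unfolding spectrum_def by (auto simp: matrix_vector_mult_diff_rdistrib matrix_vector_mult_mat)
qed

lemma spectrum_matrix_mult_swap:
  fixes P :: "complex^'m^'n" and Q :: "complex^'n^'m"
  assumes "z \<in> spectrum (P ** Q)" and "z \<noteq> 0"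
  shows "z \<in> spectrum (Q ** P)"
proof -
  obtain v where v: "v \<noteq> 0" "(P ** Q) *v v = z *s v"
    using assms(1) spectrum_iff_eigenvector by blast
  have "(Q ** P) *v (Q *v v) = z *s (Q *v v)"
    using v(2) by (simp add: matrix_vector_mul_assoc[symmetric] vector_scalar_commute)
  moreover have "Q *v v \<noteq> 0"
    using v assms(2) by (auto simp: matrix_vector_mul_assoc[symmetric] vector_mul_eq_0)
  ultimately show ?thesis using spectrum_iff_eigenvector by blast
qed

lemma gram_product_eq: "adj L ** (M ** adj M) ** L = (adj L ** M) ** adj (adj L ** M)"
  by (simp add: adj_matrix_mult matrix_mul_assoc)

lemma nonzero_spectrum_gram_product:
  assumes "z \<noteq> 0"
  shows "z \<in> spectrum (L ** adj L ** (M ** adj M)) \<longleftrightarrow>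
         z \<in> spectrum ((adj L ** M) ** adj (adj L ** M))"
proof -
  have "L ** adj L ** (M ** adj M) = L ** (adj L ** (M ** adj M))"
    by (simp add: matrix_mul_assoc)
  then show ?thesis
    using spectrum_matrix_mult_swap[OF _ assms, of L "adj L ** (M ** adj M)"]
      spectrum_matrix_mult_swap[OF _ assms, of "adj L ** (M ** adj M)" L]
    unfolding gram_product_eq by auto
qed

lemma spectrum_gram_product_Re_nonneg:
  assumes "z \<in> spectrum (L ** adj L ** (M ** adj M))"
  shows "0 \<le> Re z"
proof (cases "z = 0")
  case False
  then obtain u where "u \<noteq> 0" "((adj L ** M) ** adj (adj L ** M)) *v u = z *s u"
    using assms nonzero_spectrum_gram_product spectrum_iff_eigenvector by blast
  then show ?thesis using gram_eigenvalue_real_nonneg by blast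
qed simp

lemma finite_spectrum_gram_product: "finite (spectrum (L ** adj L ** (M ** adj M)))"
proof -
  let ?X = "(adj L ** M) ** adj (adj L ** M)"
  have "spectrum (L ** adj L ** (M ** adj M))
        \<subseteq> insert 0 (complex_of_real ` {\<mu>. \<exists>v. v \<noteq> 0 \<and> ?X *v v = \<mu> *\<^sub>R v})"
  proof
    fix z assume z: "z \<in> spectrum (L ** adj L ** (M ** adj M))"
    show "z \<in> insert 0 (complex_of_real ` {\<mu>. \<exists>v. v \<noteq> 0 \<and> ?X *v v = \<mu> *\<^sub>R v})"
    proof (cases "z = 0")
      case False
      then obtain u where u: "u \<noteq> 0" "?X *v u = z *s u"
        using z nonzero_spectrum_gram_product spectrum_iff_eigenvector by blast
      then have "z = complex_of_real (Re z)" using gram_eigenvalue_real_nonneg by blast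
      with u have "?X *v u = Re z *\<^sub>R u" by (metis scaleR_eq_of_real_scalar_mult)
      with u \<open>z = complex_of_real (Re z)\<close> show ?thesis by blast
    qed simp
  qed
  moreover have "finite {\<mu>. \<exists>v. v \<noteq> 0 \<and> ?X *v v = \<mu> *\<^sub>R v}"
    by (rule finite_eigenvalues_selfadjoint) (rule gram_matrix_selfadjoint)
  ultimately show ?thesis by (meson finite_imageI finite_insert finite_subset)
qed

lemma spectrum_gram_product_nonempty: "spectrum (L ** adj L ** (M ** adj M)) \<noteq> {}"
proof (cases "\<exists>q. (adj L ** M) *v q \<noteq> 0")
  case True
  then obtain q where "(adj L ** M) *v q \<noteq> 0" by blast
  then obtain \<mu> v where "0 < \<mu>" "v \<noteq> 0" "((adj L ** M) ** adj (adj L ** M)) *v v = \<mu> *\<^sub>R v"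
    using gram_eigenvalue_le_rayleigh[of _ "adj L ** M"] by blast
  then have "complex_of_real \<mu> \<in> spectrum ((adj L ** M) ** adj (adj L ** M))"
    by (auto simp: spectrum_iff_eigenvector scaleR_eq_of_real_scalar_mult)
  then have "complex_of_real \<mu> \<in> spectrum (L ** adj L ** (M ** adj M))"
    using nonzero_spectrum_gram_product[of "complex_of_real \<mu>" L M] \<open>0 < \<mu>\<close> by simp
  then show ?thesis by blast
next
  case False
  then have "(L ** adj L ** (M ** adj M)) *v vec 1 = 0 *s vec 1"
    by (simp add: matrix_vector_mul_assoc[symmetric] matrix_mul_assoc)
  then have "0 \<in> spectrum (L ** adj L ** (M ** adj M))"
    unfolding spectrum_iff_eigenvector by (intro exI[of _ "vec 1"]) (simp add: vec_eq_iff)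
  then show ?thesis by blast
qed

lemma min_spectrum_gram_product:
  shows "0 \<le> min_spectrum (L ** adj L ** (M ** adj M))"
    and "complex_of_real \<mu> \<in> spectrum (L ** adj L ** (M ** adj M)) \<Longrightarrow>
         min_spectrum (L ** adj L ** (M ** adj M)) \<le> \<mu>"
proof -
  let ?S = "spectrum (L ** adj L ** (M ** adj M))"
  have fin: "finite (Re ` ?S)" and ne: "Re ` ?S \<noteq> {}"
    using finite_spectrum_gram_product spectrum_gram_product_nonempty by auto
  show "0 \<le> min_spectrum (L ** adj L ** (M ** adj M))"
    unfolding min_spectrum_def using spectrum_gram_product_Re_nonneg[of _ L M]
    by (simp add: Min_ge_iff[OF fin ne])
  show "min_spectrum (L ** adj L ** (M ** adj M)) \<le> \<mu>" if "complex_of_real \<mu> \<in> ?S"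
    unfolding min_spectrum_def using Min_le[OF fin] that by (metis Re_complex_of_real image_eqI)
qed

subsection \<open>The resolvent estimate\<close>

lemma gram_coercive_on_range:
  fixes N :: "complex^'m^'k"
  assumes u: "u \<in> range ((*v) N)"
    and lam: "\<And>\<mu>. 0 < \<mu> \<Longrightarrow> complex_of_real \<mu> \<in> spectrum (N ** adj N) \<Longrightarrow> lam \<le> \<mu>"
  shows "(1 + lam) * norm u \<le> norm (u + (N ** adj N) *v u)"
proof (cases "u = 0")
  case False
  obtain \<mu> v where \<mu>: "0 < \<mu>" "v \<noteq> 0" "(N ** adj N) *v v = \<mu> *\<^sub>R v"
    and rayleigh: "\<mu> * (u \<bullet> u) \<le> u \<bullet> ((N ** adj N) *v u)"
    using gram_eigenvalue_le_rayleigh[OF u False] by blast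
  have "lam \<le> \<mu>"
    using lam[OF \<mu>(1)] \<mu> by (auto simp: spectrum_iff_eigenvector scaleR_eq_of_real_scalar_mult)
  then have "(1 + lam) * (u \<bullet> u) \<le> u \<bullet> (u + (N ** adj N) *v u)"
    using rayleigh mult_right_mono[of lam \<mu> "u \<bullet> u"] by (simp add: inner_add_right algebra_simps)
  also have "\<dots> \<le> norm u * norm (u + (N ** adj N) *v u)" by (rule norm_cauchy_schwarz)
  finally have "((1 + lam) * norm u) * norm u \<le> norm (u + (N ** adj N) *v u) * norm u"
    by (simp add: dot_square_norm power2_eq_square mult_ac)
  then show ?thesis using False by (simp add: mult_le_cancel_right)
qed simp

lemma gram_product_solution_norm_le:
  fixes L :: "complex^'k^'n" and M :: "complex^'m^'n"
  assumes eq: "z + (L ** adj L ** (M ** adj M)) *v z = x"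
    and lam: "0 \<le> lam"
      "\<And>\<mu>. 0 < \<mu> \<Longrightarrow> complex_of_real \<mu> \<in> spectrum (L ** adj L ** (M ** adj M)) \<Longrightarrow> lam \<le> \<mu>"
  shows "norm z \<le> (1 + opnorm L * opnorm (adj L ** (M ** adj M)) / (1 + lam)) * norm x"
proof -
  define G where "G = adj L ** (M ** adj M)"
  define N where "N = adj L ** M"
  define u where "u = G *v z"
  have x: "x = z + L *v u"
    using eq unfolding u_def G_def by (simp add: matrix_vector_mul_assoc matrix_mul_assoc)
  have "G *v x = u + (G ** L) *v u"
    unfolding x u_def by (simp add: matrix_vector_right_distrib matrix_vector_mul_assoc matrix_mul_assoc)
  then have Gx: "u + (N ** adj N) *v u = G *v x"
    unfolding G_def N_def gram_product_eq by simp
  have "u = N *v (adj M *v z)"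
    unfolding u_def G_def N_def by (simp add: matrix_vector_mul_assoc matrix_mul_assoc)
  then have "(1 + lam) * norm u \<le> norm (G *v x)"
    using gram_coercive_on_range[of u N lam] Gx lam(2)
    unfolding N_def by (auto simp: nonzero_spectrum_gram_product)
  also have "\<dots> \<le> opnorm G * norm x" by (rule norm_matrix_vector_le_opnorm)
  finally have u_le: "norm u \<le> opnorm G * norm x / (1 + lam)"
    using lam(1) by (simp add: field_simps)
  have "norm z = norm (x - L *v u)" using x by simp
  also have "\<dots> \<le> norm x + norm (L *v u)" by (rule norm_triangle_ineq4)
  also have "\<dots> \<le> norm x + opnorm L * norm u"
    using norm_matrix_vector_le_opnorm by (rule add_left_mono)
  also have "\<dots> \<le> norm x + opnorm L * (opnorm G * norm x / (1 + lam))"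
    by (intro add_left_mono mult_left_mono u_le opnorm_nonneg)
  also have "\<dots> = (1 + opnorm L * opnorm G / (1 + lam)) * norm x"
    using lam(1) by (simp add: field_simps)
  finally show ?thesis unfolding G_def .
qed

lemma invertible_id_plus_gram_product: "invertible (mat 1 + L ** adj L ** (M ** adj M))"
  unfolding invertible_left_inverse matrix_left_invertible_ker
proof (intro allI impI)
  fix z assume "(mat 1 + L ** adj L ** (M ** adj M)) *v z = 0"
  then have "z + (L ** adj L ** (M ** adj M)) *v z = 0"
    by (simp add: matrix_vector_mult_add_rdistrib)
  from gram_product_solution_norm_le[OF this, of 0] have "norm z \<le> 0" by simp
  then show "z = 0" by simp
qed

lemma opnorm_right_inverse_id_plus_gram_product_le:
  fixes L :: "complex^'k^'n" and M :: "complex^'m^'n"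
  assumes B: "(mat 1 + L ** adj L ** (M ** adj M)) ** B = mat 1"
    and lam: "0 \<le> lam"
      "\<And>\<mu>. 0 < \<mu> \<Longrightarrow> complex_of_real \<mu> \<in> spectrum (L ** adj L ** (M ** adj M)) \<Longrightarrow> lam \<le> \<mu>"
  shows "opnorm B \<le> 1 + sqrt (opnorm (L ** adj L)) * opnorm (adj L ** (M ** adj M)) / (1 + lam)"
proof (rule opnorm_le)
  fix x
  have "B *v x + (L ** adj L ** (M ** adj M)) *v (B *v x) = x"
    using arg_cong[OF B, of "\<lambda>P. P *v x"]
    by (simp add: matrix_vector_mul_assoc[symmetric] matrix_vector_mult_add_rdistrib)
  then have "norm (B *v x) \<le> (1 + opnorm L * opnorm (adj L ** (M ** adj M)) / (1 + lam)) * norm x"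
    using lam by (rule gram_product_solution_norm_le)
  also have "\<dots> \<le> (1 + sqrt (opnorm (L ** adj L)) * opnorm (adj L ** (M ** adj M)) / (1 + lam)) * norm x"
    using lam(1) opnorm_le_sqrt_opnorm_gram[of L]
    by (intro mult_right_mono add_left_mono divide_right_mono opnorm_nonneg) simp_all
  finally show "norm (B *v x) \<le> (1 + sqrt (opnorm (L ** adj L)) * opnorm (adj L ** (M ** adj M)) / (1 + lam)) * norm x" .
qed

lemma matrix_inv_inverse:
  assumes "invertible P"
  shows "P ** matrix_inv P = mat 1" and "matrix_inv P ** P = mat 1"
proof -
  have "P ** matrix_inv P = mat 1 \<and> matrix_inv P ** P = mat 1"
    using assms unfolding invertible_def matrix_inv_def by (rule someI_ex)
  then show "P ** matrix_inv P = mat 1" and "matrix_inv P ** P = mat 1" by simp_all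
qed

lemma adj_left_inverse_id_plus_mult:
  assumes "B ** (mat 1 + A ** C) = mat 1" and "adj A = A" and "adj C = C"
  shows "(mat 1 + C ** A) ** adj B = mat 1"
  using arg_cong[OF assms(1), of adj] assms(2,3)
  by (simp add: adj_matrix_mult adj_add adj_mat_1)

theorem theorem3p1:
  fixes A C :: "complex^'n^'n" and L :: "complex^'k^'n" and M :: "complex^'m^'n"
  assumes "hermitian_psd A" and "hermitian_psd C"
    and "A = L ** adj L" and "C = M ** adj M"
  shows "invertible (mat 1 + A ** C) \<and>
    opnorm (matrix_inv (mat 1 + A ** C))
      \<le> 1 + min (sqrt (opnorm A) * opnorm (adj L ** C)) (sqrt (opnorm C) * opnorm (A ** M))
             / (1 + min_spectrum (A ** C))"
proof -
  define B where "B = matrix_inv (mat 1 + A ** C)"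
  define lam where "lam = min_spectrum (A ** C)"
  have AC: "A ** C = L ** adj L ** (M ** adj M)" and CA: "C ** A = M ** adj M ** (L ** adj L)"
    using assms(3,4) by simp_all
  have lam: "0 \<le> lam" "\<And>\<mu>. complex_of_real \<mu> \<in> spectrum (A ** C) \<Longrightarrow> lam \<le> \<mu>"
    unfolding lam_def AC by (fact min_spectrum_gram_product)+
  have inv: "invertible (mat 1 + A ** C)"
    unfolding AC by (rule invertible_id_plus_gram_product)
  have "opnorm B \<le> 1 + sqrt (opnorm A) * opnorm (adj L ** C) / (1 + lam)"
    using opnorm_right_inverse_id_plus_gram_product_le[of L M B lam]
      matrix_inv_inverse(1)[OF inv] lam
    unfolding B_def AC assms(3,4) by blast
  moreover have "opnorm B \<le> 1 + sqrt (opnorm C) * opnorm (A ** M) / (1 + lam)"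
  proof -
    have adjA: "adj A = A" and adjC: "adj C = C" using assms(3,4) by (simp_all add: adj_matrix_mult)
    have "(mat 1 + C ** A) ** adj B = mat 1"
      using adj_left_inverse_id_plus_mult[OF matrix_inv_inverse(2)[OF inv] adjA adjC]
      unfolding B_def .
    then have "opnorm (adj B) \<le> 1 + sqrt (opnorm C) * opnorm (adj M ** A) / (1 + lam)"
      using opnorm_right_inverse_id_plus_gram_product_le[of M L "adj B" lam] lam
        spectrum_matrix_mult_swap[of _ C A]
      unfolding CA assms(3,4) by force
    then show ?thesis
      using opnorm_adj[of "A ** M"] by (simp add: opnorm_adj adj_matrix_mult adjA)
  qed
  ultimately show ?thesis
    using inv unfolding B_def lam_def by (simp add: min_def)
qed

end
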